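(* Let $r\ge 3$ and let $\mathcal H=(V,E)$ be an $r$-uniform bi-hypergraph with $|V|=2r$. If $|E|<\binom{2r}{r}/2$, then $\mathcal H$ is colorable.
   Context: A bi-hypergraph $\mathcal H=(V,E)$ consists of a finite vertex set $V$ and a set $E$ of subsets of $V$, called edges, with no edge contained in another. It is $r$-uniform if every edge has exactly $r$ elements. A mapping $f:V\to\mathbb N$ is a proper coloring of $\mathcal H$ if $1<|f(e)|<|e|$ for every $e\in E$, where $f(e)=\{f(v):v\in e\}$. $\mathcal H$ is colorable if it has a proper coloring. *)

theory Defs
  imports Main
begin

definition bi_hypergraph :: "'a set \<Rightarrow> 'a set set \<Rightarrow> bool" where
  "bi_hypergraph V E \<longleftrightarrow> finite V \<and> (\<forall>e\<in>E. e \<subseteq> V) \<and>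
     (\<forall>e\<in>E. \<forall>e'\<in>E. e \<subseteq> e' \<longrightarrow> e = e')"

definition uniform :: "nat \<Rightarrow> 'a set set \<Rightarrow> bool" where
  "uniform r E \<longleftrightarrow> (\<forall>e\<in>E. card e = r)"

definition proper_coloring :: "'a set set \<Rightarrow> ('a \<Rightarrow> nat) \<Rightarrow> bool" where
  "proper_coloring E f \<longleftrightarrow> (\<forall>e\<in>E. 1 < card (f ` e) \<and> card (f ` e) < card e)"

definition colorable :: "'a set \<Rightarrow> 'a set set \<Rightarrow> bool" where
  "colorable V E \<longleftrightarrow> (\<exists>f :: 'a \<Rightarrow> nat. proper_coloring E f)"

end

theory Submission
  imports Defs
begin

text \<open>There are \<open>binom(2r, r)\<close> sets of size \<open>r\<close> in \<open>V\<close>, and each edge \<open>e\<close> rules out at most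
  two of them as colour class, namely \<open>e\<close> and \<open>V - e\<close>. Fewer than \<open>binom(2r,r)/2\<close> edges thus leave
  an \<open>r\<close>-set \<open>A\<close> with neither \<open>A\<close> nor \<open>V - A\<close> an edge. Every edge then meets both \<open>A\<close> and
  \<open>V - A\<close>, since an \<open>r\<close>-subset of an \<open>r\<close>-set is the set itself, so colouring \<open>A\<close> with \<open>0\<close> and
  \<open>V - A\<close> with \<open>1\<close> gives each edge exactly \<open>2 < r\<close> colours.\<close>

lemma exists_subset_avoiding_edges_and_complements:
  assumes "finite V" and "\<forall>e\<in>E. e \<subseteq> V" and "2 * card E < card V choose k"
  obtains A where "A \<subseteq> V" "card A = k" "A \<notin> E" "V - A \<notin> E"
proof -
  define S where "S = {A. A \<subseteq> V \<and> card A = k}"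
  have "finite E"
    using assms(1,2) by (meson Pow_iff finite_Pow_iff finite_subset subsetI)
  have "\<exists>A\<in>S. A \<notin> E \<and> V - A \<notin> E"
  proof (rule ccontr)
    assume "\<not> (\<exists>A\<in>S. A \<notin> E \<and> V - A \<notin> E)"
    then have "S \<subseteq> E \<union> (\<lambda>e. V - e) ` E"
      unfolding S_def by (auto simp: double_diff image_iff)
    then have "card S \<le> card (E \<union> (\<lambda>e. V - e) ` E)"
      using \<open>finite E\<close> by (intro card_mono) auto
    also have "\<dots> \<le> card E + card ((\<lambda>e. V - e) ` E)" by (rule card_Un_le)
    also have "\<dots> \<le> 2 * card E" using card_image_le[OF \<open>finite E\<close>] by simp
    finally show False
      using assms(3) n_subsets[OF assms(1), of k] unfolding S_def by simp
  qed
  then show thesis using that unfolding S_def by blast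
qed

lemma edge_meets_set_and_complement:
  assumes "e \<subseteq> V" "finite V" "card e = card A" "card e = card (V - A)" "e \<noteq> A" "e \<noteq> V - A"
  shows "e \<inter> A \<noteq> {}" and "e - A \<noteq> {}"
proof -
  show "e - A \<noteq> {}"
    using assms card_subset_eq[of A e]
    by (metis Diff_eq_empty_iff card.infinite card_0_eq finite_Diff finite_subset)
  show "e \<inter> A \<noteq> {}"
  proof
    assume "e \<inter> A = {}"
    then have "e \<subseteq> V - A" using assms(1) by blast
    then show False using assms card_subset_eq[of "V - A" e] by simp
  qed
qed

lemma proper_coloring_indicator:
  assumes "\<forall>e\<in>E. finite e \<and> 2 < card e \<and> e \<inter> A \<noteq> {} \<and> e - A \<noteq> {}"
  shows "proper_coloring E (\<lambda>v. if v \<in> A then 0 else 1)"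
  unfolding proper_coloring_def
proof
  fix e assume "e \<in> E"
  then have "(\<lambda>v. if v \<in> A then 0 else 1) ` e = {0, 1 :: nat}" and "2 < card e"
    using assms by (auto simp: image_iff)
  then show "1 < card ((\<lambda>v. if v \<in> A then 0 else 1 :: nat) ` e) \<and>
      card ((\<lambda>v. if v \<in> A then 0 else 1 :: nat) ` e) < card e"
    by simp
qed

theorem mainTheorem8:
  fixes V :: "'a set" and E :: "'a set set" and r :: nat
  assumes "r \<ge> 3"
    and "bi_hypergraph V E"
    and "uniform r E"
    and "card V = 2 * r"
    and "2 * card E < (2 * r) choose r"
  shows "colorable V E"
proof -
  have "finite V" and edges_in_V: "\<forall>e\<in>E. e \<subseteq> V" and card_edge: "\<forall>e\<in>E. card e = r"
    using assms(2,3) unfolding bi_hypergraph_def uniform_def by auto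
  obtain A where A: "A \<subseteq> V" "card A = r" "A \<notin> E" "V - A \<notin> E"
    using exists_subset_avoiding_edges_and_complements[OF \<open>finite V\<close> edges_in_V] assms(4,5)
    by metis
  have "card (V - A) = r"
    using A assms(4) \<open>finite V\<close> by (simp add: card_Diff_subset finite_subset)
  then have "\<forall>e\<in>E. finite e \<and> 2 < card e \<and> e \<inter> A \<noteq> {} \<and> e - A \<noteq> {}"
    using A edge_meets_set_and_complement[OF _ \<open>finite V\<close>] edges_in_V card_edge assms(1)
      \<open>finite V\<close> finite_subset
    by (metis Suc_le_eq numeral_3_eq_3 numeral_2_eq_2)
  then have "proper_coloring E (\<lambda>v. if v \<in> A then 0 else 1)"
    by (rule proper_coloring_indicator)
  then show ?thesis unfolding colorable_def by blast
qed

end
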